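(* There exists an elliptic curve $E$ defined over $\mathbf{Q}$ with $S_{x,y}(E) \geq 5$; that is, there exist an elliptic curve $E/\mathbf{Q}$ and five distinct rational points $P_1,\dots,P_5 \in E(\mathbf{Q})$ such that their $x$-coordinates, in some order, form an arithmetic progression with nonzero common difference, and their $y$-coordinates, in some (possibly different) order, also form an arithmetic progression with nonzero common difference.
   Context: An elliptic curve over $\mathbf{Q}$ is given by a general Weierstrass equation $Y^2 + a_1XY + a_3Y = X^3 + a_2X^2 + a_4X + a_6$ with $a_i \in \mathbf{Q}$ and nonzero discriminant. Rational points $P_0,\dots,P_n\in E$ form a simultaneous arithmetic progression if their $x$-coordinates form an arithmetic progression (with nonzero difference) in some order and their $y$-coordinates form an arithmetic progression (with nonzero difference) in some, possibly different, order. $S_{x,y}(E)$ denotes the maximal number of rational points of $E$ forming a simultaneous arithmetic progression. *)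

theory Defs
  imports Complex_Main "HOL-Library.FuncSet" "HOL-Combinatorics.Permutations"
begin

definition weierstrass_disc :: "rat \<Rightarrow> rat \<Rightarrow> rat \<Rightarrow> rat \<Rightarrow> rat \<Rightarrow> rat" where
  "weierstrass_disc a1 a2 a3 a4 a6 =
     (let b2 = a1^2 + 4*a2; b4 = 2*a4 + a1*a3; b6 = a3^2 + 4*a6;
          b8 = a1^2*a6 + 4*a2*a6 - a1*a3*a4 + a2*a3^2 - a4^2
      in - (b2^2*b8) - 8*b4^3 - 27*b6^2 + 9*b2*b4*b6)"

definition on_curve :: "rat \<Rightarrow> rat \<Rightarrow> rat \<Rightarrow> rat \<Rightarrow> rat \<Rightarrow> rat \<times> rat \<Rightarrow> bool" where
  "on_curve a1 a2 a3 a4 a6 P =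
     (let x = fst P; y = snd P in y^2 + a1*x*y + a3*y = x^3 + a2*x^2 + a4*x + a6)"

definition is_AP_some_order :: "nat \<Rightarrow> (nat \<Rightarrow> rat) \<Rightarrow> bool" where
  "is_AP_some_order n v =
     (\<exists>\<sigma> a d. \<sigma> permutes {0..<n} \<and> d \<noteq> 0 \<and> (\<forall>i<n. v (\<sigma> i) = a + of_nat i * d))"

end

theory Submission
  imports Defs
begin

text \<open>The general Weierstrass equation is linear in its coefficients, so five prescribed
  points impose five linear conditions on \<open>a\<^sub>1, a\<^sub>2, a\<^sub>3, a\<^sub>4, a\<^sub>6\<close>. For the points \<open>(i, \<tau> i)\<close>,
  \<open>i = 0, \<dots>, 4\<close>, with \<open>\<tau>\<close> the transposition of 2 and 3, the unique solution is
  \<open>Y\<^sup>2 + 10XY - 29Y = X\<^sup>3 + 6X\<^sup>2 - 25X\<close>, which has nonzero discriminant. The \<open>x\<close>-coordinates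
  are \<open>0, \<dots>, 4\<close> in order and the \<open>y\<close>-coordinates are the same values permuted by \<open>\<tau>\<close>.\<close>

lemma is_AP_some_order_of_nat_permutation:
  assumes "f permutes {0..<n}"
  shows "is_AP_some_order n (\<lambda>i. of_nat (f i))"
  unfolding is_AP_some_order_def
proof (intro exI conjI allI impI)
  show "inv f permutes {0..<n}"
    using assms by (rule permutes_inv)
  fix i assume "i < n"
  show "of_nat (f (inv f i)) = 0 + of_nat i * (1::rat)"
    using permutes_inverses(1)[OF assms] by simp
qed simp

lemma on_curve_swap23_points:
  assumes "i < 5"
  shows "on_curve 10 6 (-29) (-25) 0 (of_nat i, of_nat (Transposition.transpose 2 3 i))"
proof -
  from assms have "i = 0 \<or> i = 1 \<or> i = 2 \<or> i = 3 \<or> i = 4" by auto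
  then show ?thesis
    by (auto simp: on_curve_def Transposition.transpose_def)
qed

theorem theorem2:
  shows "\<exists>(a1::rat) a2 a3 a4 a6 (P :: nat \<Rightarrow> rat \<times> rat).
           weierstrass_disc a1 a2 a3 a4 a6 \<noteq> 0 \<and>
           (\<forall>i<5. on_curve a1 a2 a3 a4 a6 (P i)) \<and>
           inj_on P {0..<5} \<and>
           is_AP_some_order 5 (\<lambda>i. fst (P i)) \<and>
           is_AP_some_order 5 (\<lambda>i. snd (P i))"
proof -
  define P :: "nat \<Rightarrow> rat \<times> rat" where
    "P = (\<lambda>i. (of_nat i, of_nat (Transposition.transpose 2 3 i)))"
  have "weierstrass_disc 10 6 (-29) (-25) 0 \<noteq> 0"
    by (simp add: weierstrass_disc_def Let_def)
  moreover have "\<forall>i<5. on_curve 10 6 (-29) (-25) 0 (P i)"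
    by (simp add: P_def on_curve_swap23_points)
  moreover have "inj_on P {0..<5}"
    by (auto simp: inj_on_def P_def)
  moreover have "is_AP_some_order 5 (\<lambda>i. fst (P i))"
    using is_AP_some_order_of_nat_permutation[OF permutes_id] by (simp add: P_def)
  moreover have "Transposition.transpose 2 3 permutes {0..<5::nat}"
    by (rule permutes_swap_id) auto
  then have "is_AP_some_order 5 (\<lambda>i. snd (P i))"
    unfolding P_def by (simp add: is_AP_some_order_of_nat_permutation)
  ultimately show ?thesis by blast
qed

end
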